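(* Let $\rho$ be a representation of $D^{2,2,2}$ and let $\{i,j,k\}=\{1,2,3\}$. Then, as linear maps $X^3_0\to X^0_0$, $$\varphi^{(0)}_i\circ\varphi^{(1)}_j\circ\varphi^{(2)}_i+\varphi^{(0)}_i\circ\varphi^{(1)}_k\circ\varphi^{(2)}_i=0 \qquad\text{and}\qquad \varphi^{(0)}_i\circ\varphi^{(1)}_i\circ\varphi^{(2)}_i=0.$$ Consequently, $\varphi^{(0)}_i\varphi^{(1)}_j\varphi^{(2)}_i(B)=\varphi^{(0)}_i\varphi^{(1)}_k\varphi^{(2)}_i(B)$ for every subspace $B\subseteq X^3_0$.
   Context: $D^{2,2,2}$ is the modular lattice generated by $x_1,y_1,x_2,y_2,x_3,y_3$ subject only to $x_i\subseteq y_i$ ($i=1,2,3$), with a greatest element $I$ adjoined. A representation $\rho$ of $D^{2,2,2}$ in a finite-dimensional vector space $X_0$ is a lattice morphism from $D^{2,2,2}$ to the subspace lattice of $X_0$, with $\rho(I)=X_0$. Write $X_i=\rho(x_i)\subseteq Y_i=\rho(y_i)$. Coxeter functor: put $R=Y_1\oplus Y_2\oplus Y_3$ and $X^1_0=\{(\eta_1,\eta_2,\eta_3)\in R:\sum\eta_i=0\}$. Let $G'_i\subseteq R$ be the triples with $i$-th coordinate in $X_i$, and $H'_i\subseteq R$ the triples with $i$-th coordinate $0$. $\Phi^+\rho$ is the representation in $X^1_0$ with $\Phi^+\rho(y_i)=G'_i\cap X^1_0$, $\Phi^+\rho(x_i)=H'_i\cap X^1_0$, $\Phi^+\rho(I)=X^1_0$.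 Iterates: let $X^n_0$ be the space of $(\Phi^+)^n\rho$, with $X^0_0=X_0$. Let $\varphi^{(n)}_i:X^{n+1}_0\to X^n_0$ be the map $(\eta_1,\eta_2,\eta_3)\mapsto\eta_i$ obtained by applying the construction to $(\Phi^+)^n\rho$. *)

theory Defs
  imports Complex_Main "HOL-Library.Product_Plus"
begin

text \<open>A representation of D^{2,2,2} in a vector space X0 (over a field 'k, with scalar
multiplication s) is the same as a choice of subspaces X_i \<subseteq> Y_i \<subseteq> X0 (i=1,2,3),
since D^{2,2,2} is the free modular lattice on x_i \<le> y_i with a top adjoined.\<close>

record 'v drep =
  sp   :: "'v set"
  xsub :: "nat \<Rightarrow> 'v set"
  ysub :: "nat \<Rightarrow> 'v set"

definition is_rep :: "('k::field \<Rightarrow> 'v::ab_group_add \<Rightarrow> 'v) \<Rightarrow> 'v drep \<Rightarrow> bool" where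
  "is_rep s \<rho> \<longleftrightarrow>
     module.subspace s (sp \<rho>) \<and>
     (\<exists>B. finite B \<and> B \<subseteq> sp \<rho> \<and> module.span s B = sp \<rho>) \<and>
     (\<forall>i\<in>{1,2,3}. module.subspace s (xsub \<rho> i) \<and> module.subspace s (ysub \<rho> i) \<and>
                   xsub \<rho> i \<subseteq> ysub \<rho> i \<and> ysub \<rho> i \<subseteq> sp \<rho>)"

definition proj3 :: "nat \<Rightarrow> 'v \<times> 'v \<times> 'v \<Rightarrow> 'v" where
  "proj3 i t = (if i = 1 then fst t else if i = 2 then fst (snd t) else snd (snd t))"

definition scale3 :: "('k \<Rightarrow> 'v \<Rightarrow> 'v) \<Rightarrow> 'k \<Rightarrow> 'v \<times> 'v \<times> 'v \<Rightarrow> 'v \<times> 'v \<times> 'v" where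
  "scale3 s c t = (s c (fst t), s c (fst (snd t)), s c (snd (snd t)))"

definition Phi :: "'v::ab_group_add drep \<Rightarrow> ('v \<times> 'v \<times> 'v) drep" where
  "Phi \<rho> = (let X1 = {t. proj3 1 t \<in> ysub \<rho> 1 \<and> proj3 2 t \<in> ysub \<rho> 2 \<and> proj3 3 t \<in> ysub \<rho> 3 \<and>
                          proj3 1 t + proj3 2 t + proj3 3 t = 0}
            in \<lparr> sp = X1,
                 xsub = (\<lambda>i. {t \<in> X1. proj3 i t = 0}),
                 ysub = (\<lambda>i. {t \<in> X1. proj3 i t \<in> xsub \<rho> i}) \<rparr>)"

end

theory Submission
  imports Defs
begin

text \<open>Write \<open>w = \<phi>\<^sub>i v\<close> for \<open>v \<in> X\<^sup>3\<^sub>0\<close>. Then \<open>w \<in> \<Phi>\<^sup>+\<Phi>\<^sup>+\<rho>(y\<^sub>i)\<close>, so \<open>\<phi>\<^sub>i w \<in> \<Phi>\<^sup>+\<rho>(x\<^sub>i)\<close>, whose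
  elements have vanishing \<open>i\<close>-th coordinate: this gives \<open>\<phi>\<^sub>i\<phi>\<^sub>i\<phi>\<^sub>i = 0\<close>. Since \<open>w \<in> X\<^sup>2\<^sub>0\<close>, its
  coordinates sum to zero, and applying the additive map \<open>\<phi>\<^sub>i\<close> yields
  \<open>\<phi>\<^sub>i\<phi>\<^sub>i w + \<phi>\<^sub>i\<phi>\<^sub>j w + \<phi>\<^sub>i\<phi>\<^sub>k w = 0\<close>, hence the first identity. So the two composites differ
  by a sign, and a subspace is invariant under negation.
  None of this uses that \<open>\<rho>\<close> is a representation.\<close>

lemma proj3_add [simp]: "proj3 i (a + b) = proj3 i a + proj3 i b"
  by (simp add: proj3_def)

lemma proj3_uminus [simp]: "proj3 i (- a) = - proj3 i a"
  by (simp add: proj3_def)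

lemma sum_proj3_perm:
  fixes t :: "'a::ab_semigroup_add \<times> 'a \<times> 'a"
  assumes "{i, j, k} = {1, 2, 3}"
  shows "proj3 i t + proj3 j t + proj3 k t = proj3 1 t + proj3 2 t + proj3 3 t"
proof -
  have "i \<in> {1, 2, 3}" "j \<in> {1, 2, 3}" "k \<in> {1, 2, 3}"
    using assms by blast+
  moreover have "distinct [i, j, k]"
    using assms by (intro card_distinct) simp
  ultimately show ?thesis
    by (auto simp: proj3_def ac_simps)
qed

lemma mem_sp_Phi:
  "v \<in> sp (Phi \<sigma>) \<longleftrightarrow>
     proj3 1 v \<in> ysub \<sigma> 1 \<and> proj3 2 v \<in> ysub \<sigma> 2 \<and> proj3 3 v \<in> ysub \<sigma> 3 \<and>
     proj3 1 v + proj3 2 v + proj3 3 v = 0"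
  by (simp add: Phi_def Let_def)

lemma mem_xsub_Phi: "v \<in> xsub (Phi \<sigma>) i \<longleftrightarrow> v \<in> sp (Phi \<sigma>) \<and> proj3 i v = 0"
  by (simp add: Phi_def Let_def)

lemma mem_ysub_Phi: "v \<in> ysub (Phi \<sigma>) i \<longleftrightarrow> v \<in> sp (Phi \<sigma>) \<and> proj3 i v \<in> xsub \<sigma> i"
  by (simp add: Phi_def Let_def)

lemma proj3_mem_ysub_Phi:
  assumes "i \<in> {1, 2, 3}" and "v \<in> sp (Phi \<sigma>)"
  shows "proj3 i v \<in> ysub \<sigma> i"
  using assms by (auto simp: mem_sp_Phi)

lemma proj3_proj3_ysub_Phi_Phi:
  assumes "w \<in> ysub (Phi (Phi \<sigma>)) i"
  shows "proj3 i (proj3 i w) = 0"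
  using assms by (simp add: mem_ysub_Phi mem_xsub_Phi)

lemma sum_proj3_proj3_sp_Phi:
  assumes "{i, j, k} = {1, 2, 3}" and "w \<in> sp (Phi \<sigma>)"
  shows "proj3 l (proj3 i w) + proj3 l (proj3 j w) + proj3 l (proj3 k w) = 0"
proof -
  have "proj3 i w + proj3 j w + proj3 k w = 0"
    using assms(2) by (simp add: sum_proj3_perm[OF assms(1)] mem_sp_Phi)
  then have "proj3 l (proj3 i w + proj3 j w + proj3 k w) = 0"
    by (simp add: proj3_def)
  then show ?thesis
    by simp
qed

lemma proj3_iii_Phi3_eq_0:
  assumes "i \<in> {1, 2, 3}" and "v \<in> sp (Phi (Phi (Phi \<rho>)))"
  shows "proj3 i (proj3 i (proj3 i v)) = 0"
  by (rule proj3_proj3_ysub_Phi_Phi[OF proj3_mem_ysub_Phi[OF assms]])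

lemma proj3_iji_add_proj3_iki_Phi3_eq_0:
  assumes ijk: "{i, j, k} = {1, 2, 3}" and v: "v \<in> sp (Phi (Phi (Phi \<rho>)))"
  shows "proj3 i (proj3 j (proj3 i v)) + proj3 i (proj3 k (proj3 i v)) = 0"
proof -
  have i: "i \<in> {1, 2, 3}"
    using ijk by blast
  have w: "proj3 i v \<in> ysub (Phi (Phi \<rho>)) i"
    using proj3_mem_ysub_Phi[OF i v] .
  then have "proj3 i v \<in> sp (Phi (Phi \<rho>))"
    by (simp add: mem_ysub_Phi)
  from sum_proj3_proj3_sp_Phi[OF ijk this, of i] proj3_proj3_ysub_Phi_Phi[OF w]
  show ?thesis
    by (simp add: add.assoc)
qed

lemma image_eq_if_eq_uminus:
  fixes f g :: "'a::ab_group_add \<Rightarrow> 'b::ab_group_add"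
  assumes odd: "\<And>x. g (- x) = - g x"
    and closed: "\<And>x. x \<in> B \<Longrightarrow> - x \<in> B"
    and eq: "\<And>x. x \<in> B \<Longrightarrow> f x = - g x"
  shows "f ` B = g ` B"
proof -
  have "uminus ` B = B"
    using closed by force
  have "f ` B = (\<lambda>x. g (- x)) ` B"
    using eq odd by (intro image_cong) auto
  also have "\<dots> = g ` uminus ` B"
    by (simp add: image_image)
  finally show ?thesis
    using \<open>uminus ` B = B\<close> by simp
qed

lemma module_scale3:
  assumes "module s"
  shows "module (scale3 s)"
proof -
  interpret module s by (fact assms)
  show ?thesis
    by unfold_locales (simp_all add: scale3_def scale_right_distrib scale_left_distrib)
qed

theorem mainTheorem15:
  fixes s :: "'k::field \<Rightarrow> 'v::ab_group_add \<Rightarrow> 'v"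
    and \<rho> :: "'v drep"
    and i j k :: nat
  assumes "vector_space s"
    and "is_rep s \<rho>"
    and "{i, j, k} = {1, 2, 3}"
  shows "(\<forall>v\<in>sp (Phi (Phi (Phi \<rho>))).
            proj3 i (proj3 j (proj3 i v)) + proj3 i (proj3 k (proj3 i v)) = 0 \<and>
            proj3 i (proj3 i (proj3 i v)) = 0) \<and>
         (\<forall>B. module.subspace (scale3 (scale3 (scale3 s))) B \<and> B \<subseteq> sp (Phi (Phi (Phi \<rho>))) \<longrightarrow>
            (\<lambda>v. proj3 i (proj3 j (proj3 i v))) ` B = (\<lambda>v. proj3 i (proj3 k (proj3 i v))) ` B)"
proof -
  have i: "i \<in> {1, 2, 3}"
    using assms(3) by blast
  have identities: "proj3 i (proj3 j (proj3 i v)) + proj3 i (proj3 k (proj3 i v)) = 0 \<and>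
      proj3 i (proj3 i (proj3 i v)) = 0" if "v \<in> sp (Phi (Phi (Phi \<rho>)))" for v
    using proj3_iji_add_proj3_iki_Phi3_eq_0[OF assms(3) that] proj3_iii_Phi3_eq_0[OF i that]
    by blast
  have module3: "module (scale3 (scale3 (scale3 s)))"
    using assms(1) unfolding module_iff_vector_space[symmetric] by (intro module_scale3)
  have images: "(\<lambda>v. proj3 i (proj3 j (proj3 i v))) ` B = (\<lambda>v. proj3 i (proj3 k (proj3 i v))) ` B"
    if subspace: "module.subspace (scale3 (scale3 (scale3 s))) B"
      and B_sp: "B \<subseteq> sp (Phi (Phi (Phi \<rho>)))" for B
  proof (rule image_eq_if_eq_uminus)
    show "- v \<in> B" if "v \<in> B" for v
      using module.subspace_neg[OF module3 subspace that] .
    show "proj3 i (proj3 j (proj3 i v)) = - proj3 i (proj3 k (proj3 i v))" if "v \<in> B" for v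
      using identities[OF subsetD[OF B_sp that]] by (simp add: eq_neg_iff_add_eq_0)
  qed simp
  show ?thesis
    using identities images by blast
qed

end
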